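(* Let $V$ be an $\mathbb{R}^d$-valued random vector whose law $P_V$ has a Lebesgue density $f_V$, and assume that its characteristic function satisfies $\varphi_V(\omega)\neq 0$ for Lebesgue-a.e. $\omega\in\mathbb{R}^d$. Then for every $\lambda\in C_0(\mathbb{R}^d;\mathbb{C})$ there exists a unique continuous linear functional $\mathcal{T}_{\lambda,V}\in\mathcal{A}_V'(\mathbb{R}^d)$ such that \[ \mathcal{T}_{\lambda,V}\bigl[\mathcal{K}_V[\mu]\bigr]=\int_{\mathbb{R}^d}\lambda(x)\,d\mu(x)\qquad\text{for all }\mu\in\mathcal{M}(\mathbb{R}^d). \] In particular, if $X$ is an $\mathbb{R}^d$-valued random vector independent of $V$ with law $P_X$ and $Y=X+V$, then the density of $Y$ is $f_Y=\mathcal{K}_V[P_X]$ and \[ \mathcal{T}_{\lambda,V}[f_Y]=\int_{\mathbb{R}^d}\lambda(x)\,dP_X(x). \]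
   Context: $\varphi_V(\omega)=\mathbb{E}[e^{i\omega^\top V}]$. $\mathcal{M}(\mathbb{R}^d)$ is the Banach space of finite signed (complex allowed) Radon measures on $\mathbb{R}^d$ with the total variation norm $\|\mu\|_{TV}=\sup\{|\int h\,d\mu|: h\in C_0(\mathbb{R}^d),\|h\|_\infty\le 1\}$. The convolution operator is $\mathcal{K}_V[\mu](y)=(f_V*\mu)(y)=\int f_V(y-x)\,d\mu(x)$, mapping $\mathcal{M}(\mathbb{R}^d)$ into $L^1(\mathbb{R}^d;\mathbb{C})$. The space of $V$-admissible mixtures is $\mathcal{A}_V(\mathbb{R}^d)=\{f_V*\mu:\mu\in\mathcal{M}(\mathbb{R}^d)\}$; under the nonvanishing assumption on $\varphi_V$ the representing measure $\mu$ of each $f\in\mathcal{A}_V$ is unique and $\mathcal{A}_V$ is normed by $\|f\|_{\mathcal{A}_V}=\|\mu\|_{TV}$ where $f=f_V*\mu$. $\mathcal{A}_V'(\mathbb{R}^d)$ denotes the space of continuous linear functionals on $(\mathcal{A}_V(\mathbb{R}^d),\|\cdot\|_{\mathcal{A}_V})$. $C_0$ denotes continuous functions vanishing at infinity. *)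

theory Defs
  imports "HOL-Probability.Probability"
begin

text \<open>A finite complex Borel (Radon) measure on R^d is represented as a pair (nu, g):
  a finite positive Borel measure nu together with a nu-integrable Borel density g,
  i.e. the complex measure g d nu. Every finite complex measure has this form
  (take nu = |mu| and g = d mu / d|mu|).\<close>

type_synonym 'n cmeas = "(real^'n) measure \<times> (real^'n \<Rightarrow> complex)"

definition cmeas :: "'n::finite cmeas set" where
  "cmeas = {(\<nu>, g). finite_measure \<nu> \<and> sets \<nu> = sets borel \<and>
                     g \<in> borel_measurable borel \<and> integrable \<nu> g}"

definition cint :: "'n::finite cmeas \<Rightarrow> (real^'n \<Rightarrow> complex) \<Rightarrow> complex" where
  "cint \<mu> h = (\<integral>x. h x * snd \<mu> x \<partial>(fst \<mu>))"

definition C0 :: "(real^'n::finite \<Rightarrow> complex) set" where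
  "C0 = {h. continuous_on UNIV h \<and> (h \<longlongrightarrow> 0) at_infinity}"

definition tv_norm :: "'n::finite cmeas \<Rightarrow> real" where
  "tv_norm \<mu> = (SUP h \<in> {h \<in> C0. \<forall>x. norm (h x) \<le> 1}. norm (cint \<mu> h))"

definition conv_op :: "(real^'n::finite \<Rightarrow> real) \<Rightarrow> 'n cmeas \<Rightarrow> (real^'n \<Rightarrow> complex)" where
  "conv_op fV \<mu> = (\<lambda>y. cint \<mu> (\<lambda>x. complex_of_real (fV (y - x))))"

definition admissible :: "(real^'n::finite \<Rightarrow> real) \<Rightarrow> (real^'n \<Rightarrow> complex) set" where
  "admissible fV = conv_op fV ` cmeas"

definition adm_norm :: "(real^'n::finite \<Rightarrow> real) \<Rightarrow> (real^'n \<Rightarrow> complex) \<Rightarrow> real" where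
  "adm_norm fV f = tv_norm (SOME \<mu>. \<mu> \<in> cmeas \<and> conv_op fV \<mu> = f)"

definition adm_dual :: "(real^'n::finite \<Rightarrow> real) \<Rightarrow> ((real^'n \<Rightarrow> complex) \<Rightarrow> complex) set" where
  "adm_dual fV = {T.
     (\<forall>f \<in> admissible fV. \<forall>g \<in> admissible fV. T (\<lambda>x. f x + g x) = T f + T g) \<and>
     (\<forall>c. \<forall>f \<in> admissible fV. T (\<lambda>x. c * f x) = c * T f) \<and>
     (\<exists>C. \<forall>f \<in> admissible fV. norm (T f) \<le> C * adm_norm fV f)}"

definition char_fun :: "'s measure \<Rightarrow> ('s \<Rightarrow> real^'n::finite) \<Rightarrow> real^'n \<Rightarrow> complex" where
  "char_fun M V \<omega> = (\<integral>s. cis (\<omega> \<bullet> V s) \<partial>M)"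

end

theory Submission
  imports Defs
begin

text \<open>Convolution with \<open>f\<^sub>V\<close> multiplies Fourier transforms: the Fourier transform of
  \<open>K\<^sub>V[\<mu>]\<close> is \<open>\<phi>\<^sub>V \<cdot> \<mu>\<^sup>\<and>\<close>. As \<open>\<phi>\<^sub>V \<noteq> 0\<close> almost everywhere and \<open>\<mu>\<^sup>\<and>\<close> is continuous, \<open>K\<^sub>V[\<mu>]\<close>
  (even up to a null set) determines \<open>\<mu>\<^sup>\<and>\<close> everywhere, and a finite complex measure is
  determined by its Fourier transform: on a large cube a bounded continuous function agrees
  with a function on a torus, which Stone-Weierstrass approximates uniformly by trigonometric
  polynomials, while the tails of \<open>\<mu>\<close> outside the cube are small. Hence
  \<open>T\<^sub>\<lambda>[K\<^sub>V \<mu>] = \<integral>\<lambda> d\<mu>\<close> is well defined; it is linear because \<open>K\<^sub>V\<close> is, and bounded by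
  \<open>sup |\<lambda>|\<close> times the total variation. For \<open>Y = X + V\<close> with \<open>X\<close> independent of \<open>V\<close>, the
  law of \<open>Y\<close> is the convolution \<open>P\<^sub>X \<star> P\<^sub>V\<close>, whose density is \<open>K\<^sub>V[P\<^sub>X]\<close>.\<close>

definition bounded_borel :: "('a::topological_space \<Rightarrow> complex) \<Rightarrow> bool" where
  "bounded_borel h \<longleftrightarrow> h \<in> borel_measurable borel \<and> (\<exists>B. \<forall>x. norm (h x) \<le> B)"

lemma bounded_borel_continuous:
  "continuous_on UNIV h \<Longrightarrow> (\<And>x. norm (h x) \<le> B) \<Longrightarrow> bounded_borel h"
  unfolding bounded_borel_def by (auto intro: borel_measurable_continuous_onI)

lemma bounded_borel_add: "bounded_borel h \<Longrightarrow> bounded_borel k \<Longrightarrow> bounded_borel (\<lambda>x. h x + k x)"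
  unfolding bounded_borel_def
  by (auto intro: order_trans[OF norm_triangle_ineq add_mono])

lemma bounded_borel_diff: "bounded_borel h \<Longrightarrow> bounded_borel k \<Longrightarrow> bounded_borel (\<lambda>x. h x - k x)"
  unfolding bounded_borel_def
  by (auto intro: order_trans[OF norm_triangle_ineq4 add_mono])

lemma bounded_borel_cmult:
  assumes "bounded_borel h"
  shows "bounded_borel (\<lambda>x. c * h x)"
proof -
  obtain B where "\<forall>x. norm (h x) \<le> B" using assms by (auto simp: bounded_borel_def)
  then have "\<forall>x. norm (c * h x) \<le> norm c * B" by (simp add: norm_mult mult_left_mono)
  then show ?thesis using assms by (auto simp: bounded_borel_def)
qed

lemma measurable_bounded_borel:
  "bounded_borel h \<Longrightarrow> sets \<nu> = sets borel \<Longrightarrow> h \<in> borel_measurable \<nu>"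
  using measurable_cong_sets[of \<nu> borel borel borel] by (auto simp: bounded_borel_def)

lemma integrable_bounded_borel_mult:
  assumes "integrable \<nu> g" "sets \<nu> = sets borel" "bounded_borel h"
  shows "integrable \<nu> (\<lambda>x. h x * g x)"
proof -
  obtain B where B: "\<And>x. norm (h x) \<le> B" using assms(3) by (auto simp: bounded_borel_def)
  have "integrable \<nu> (\<lambda>x. of_real B * g x)" using assms(1) by simp
  then show ?thesis
  proof (rule Bochner_Integration.integrable_bound)
    show "(\<lambda>x. h x * g x) \<in> borel_measurable \<nu>"
      using measurable_bounded_borel[OF assms(3,2)] assms(1) by measurable
    show "AE x in \<nu>. norm (h x * g x) \<le> norm (complex_of_real B * g x)"
      using B order_trans[OF norm_ge_zero B] by (auto simp: norm_mult intro!: mult_right_mono)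
  qed
qed

lemma integrable_norm_bounded_borel_mult:
  fixes g :: "_ \<Rightarrow> complex"
  assumes "integrable \<nu> g" "sets \<nu> = sets borel" "bounded_borel h"
  shows "integrable \<nu> (\<lambda>x. norm (h x) * norm (g x))"
  using integrable_norm[OF integrable_bounded_borel_mult[OF assms]] by (simp add: norm_mult)

lemma cmeasE:
  assumes "\<mu> \<in> cmeas"
  obtains \<nu> g where "\<mu> = (\<nu>, g)" "finite_measure \<nu>" "sets \<nu> = sets borel"
    "g \<in> borel_measurable \<nu>" "g \<in> borel_measurable borel" "integrable \<nu> g"
proof -
  obtain \<nu> g where \<mu>: "\<mu> = (\<nu>, g)" by force
  with assms have "sets \<nu> = sets borel" "g \<in> borel_measurable borel" "finite_measure \<nu>" "integrable \<nu> g"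
    by (auto simp: cmeas_def)
  moreover from calculation have "g \<in> borel_measurable \<nu>" by simp
  ultimately show ?thesis using that \<mu> by blast
qed

lemma cint_integrable: "\<mu> \<in> cmeas \<Longrightarrow> bounded_borel h \<Longrightarrow> integrable (fst \<mu>) (\<lambda>x. h x * snd \<mu> x)"
  by (elim cmeasE) (auto intro: integrable_bounded_borel_mult)

lemma cint_add:
  "\<mu> \<in> cmeas \<Longrightarrow> bounded_borel h \<Longrightarrow> bounded_borel k \<Longrightarrow> cint \<mu> (\<lambda>x. h x + k x) = cint \<mu> h + cint \<mu> k"
  unfolding cint_def using cint_integrable[of \<mu> h] cint_integrable[of \<mu> k]
  by (simp add: distrib_right)

lemma cint_diff:
  "\<mu> \<in> cmeas \<Longrightarrow> bounded_borel h \<Longrightarrow> bounded_borel k \<Longrightarrow> cint \<mu> (\<lambda>x. h x - k x) = cint \<mu> h - cint \<mu> k"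
  unfolding cint_def using cint_integrable[of \<mu> h] cint_integrable[of \<mu> k]
  by (simp add: left_diff_distrib)

lemma cint_cmult: "cint \<mu> (\<lambda>x. c * h x) = c * cint \<mu> h"
  unfolding cint_def by (simp add: mult.assoc)

lemma norm_cint_le: "norm (cint \<mu> h) \<le> (\<integral>x. norm (h x) * norm (snd \<mu> x) \<partial>fst \<mu>)"
  unfolding cint_def using integral_norm_bound[of "fst \<mu>" "\<lambda>x. h x * snd \<mu> x"] by (simp add: norm_mult)

lemma norm_cint_le_bound:
  assumes "\<mu> \<in> cmeas" "bounded_borel k" "\<And>x. norm (k x) \<le> e"
  shows "norm (cint \<mu> k) \<le> e * (\<integral>x. norm (snd \<mu> x) \<partial>fst \<mu>)"
proof -
  obtain \<nu> g where \<mu>: "\<mu> = (\<nu>, g)" "sets \<nu> = sets borel" "integrable \<nu> g"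
    using assms(1) by (elim cmeasE) blast
  have "norm (cint \<mu> k) \<le> (\<integral>x. norm (k x) * norm (g x) \<partial>\<nu>)"
    using norm_cint_le[of \<mu>] \<mu>(1) by simp
  also have "\<dots> \<le> (\<integral>x. e * norm (g x) \<partial>\<nu>)"
    using integrable_norm_bounded_borel_mult[OF \<mu>(3,2) assms(2)] \<mu>(3) assms(3)
    by (intro integral_mono) (auto intro: mult_right_mono)
  finally show ?thesis using \<mu>(1) by simp
qed

inductive_set trig_poly :: "(real^'n::finite \<Rightarrow> complex) set" where
  trig_poly_cis: "(\<lambda>x. cis (w \<bullet> x)) \<in> trig_poly"
| trig_poly_add: "p \<in> trig_poly \<Longrightarrow> q \<in> trig_poly \<Longrightarrow> (\<lambda>x. p x + q x) \<in> trig_poly"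
| trig_poly_cmult: "p \<in> trig_poly \<Longrightarrow> (\<lambda>x. c * p x) \<in> trig_poly"

lemma borel_measurable_cis_inner [measurable]: "(\<lambda>y. cis (w \<bullet> y)) \<in> borel_measurable borel"
  by (intro borel_measurable_continuous_onI continuous_intros)

lemma bounded_borel_trig_poly: "p \<in> trig_poly \<Longrightarrow> bounded_borel p"
proof (induction rule: trig_poly.induct)
  case (trig_poly_cis w)
  show ?case unfolding bounded_borel_def by (auto intro!: exI[of _ 1])
qed (auto intro: bounded_borel_add bounded_borel_cmult)

lemma trig_poly_cis_mult: "q \<in> trig_poly \<Longrightarrow> (\<lambda>x. cis (w \<bullet> x) * q x) \<in> trig_poly"
proof (induction rule: trig_poly.induct)
  case (trig_poly_cis w')
  have "(\<lambda>x. cis ((w + w') \<bullet> x)) \<in> trig_poly" by (rule trig_poly.trig_poly_cis)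
  then show ?case by (simp add: cis_mult inner_add_left)
next
  case (trig_poly_add p q)
  then show ?case using trig_poly.trig_poly_add[OF trig_poly_add.IH] by (simp add: distrib_left)
next
  case (trig_poly_cmult p c)
  then show ?case using trig_poly.trig_poly_cmult[OF trig_poly_cmult.IH, of c] by (simp add: ac_simps)
qed

lemma trig_poly_mult: "p \<in> trig_poly \<Longrightarrow> q \<in> trig_poly \<Longrightarrow> (\<lambda>x. p x * q x) \<in> trig_poly"
proof (induction rule: trig_poly.induct)
  case (trig_poly_cis w)
  then show ?case by (rule trig_poly_cis_mult)
next
  case (trig_poly_add p1 p2)
  then show ?case
    using trig_poly.trig_poly_add[of "\<lambda>x. p1 x * q x" "\<lambda>x. p2 x * q x"] by (simp add: distrib_right)
next
  case (trig_poly_cmult p c)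
  then show ?case using trig_poly.trig_poly_cmult[OF trig_poly_cmult.IH, of c] by (simp add: ac_simps)
qed

lemma cint_trig_poly_eq:
  assumes "\<mu> \<in> cmeas" "\<mu>' \<in> cmeas" "\<And>w. cint \<mu> (\<lambda>x. cis (w \<bullet> x)) = cint \<mu>' (\<lambda>x. cis (w \<bullet> x))"
  shows "p \<in> trig_poly \<Longrightarrow> cint \<mu> p = cint \<mu>' p"
proof (induction rule: trig_poly.induct)
  case (trig_poly_add p q)
  then show ?case using assms(1,2) by (simp add: cint_add bounded_borel_trig_poly)
qed (use assms(3) in \<open>simp_all add: cint_cmult\<close>)

section \<open>Uniform approximation by trigonometric polynomials on cubes\<close>

definition torus :: "(complex^'n::finite) set" where
  "torus = {z. \<forall>i. norm (z$i) = 1}"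

definition torus_embedding :: "real \<Rightarrow> real^'n::finite \<Rightarrow> complex^'n" where
  "torus_embedding r x = (\<chi> i. cis (x$i / r))"

definition trig_ring :: "real \<Rightarrow> (complex^'n::finite \<Rightarrow> real) set" where
  "trig_ring r = {f. continuous_on torus f \<and>
     (\<exists>p\<in>trig_poly. \<forall>x. complex_of_real (f (torus_embedding r x)) = p x)}"

lemma torus_embedding_in_torus: "torus_embedding r x \<in> torus"
  by (simp add: torus_embedding_def torus_def)

lemma compact_torus: "compact (torus :: (complex^'n::finite) set)"
  unfolding compact_eq_bounded_closed
proof
  show "closed (torus :: (complex^'n::finite) set)" unfolding torus_def
    by (intro closed_Collect_all closed_Collect_eq continuous_intros)
next
  show "bounded (torus :: (complex^'n::finite) set)" unfolding bounded_iff
  proof (intro exI ballI)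
    fix z :: "complex^'n" assume "z \<in> torus"
    then show "norm z \<le> real CARD('n)"
      using L2_set_le_sum[of UNIV "\<lambda>i. norm (z$i)"] by (simp add: torus_def norm_vec_def)
  qed
qed

lemma of_real_cos_cis: "complex_of_real (cos t) = (1/2) * cis t + (1/2) * cis (- t)"
  by (simp add: complex_eq_iff)

lemma of_real_sin_cis: "complex_of_real (sin t) = (- \<i>/2) * cis t + (\<i>/2) * cis (- t)"
  by (simp add: complex_eq_iff)

lemma coordinate_in_trig_ring:
  assumes "r \<noteq> 0"
  shows "(\<lambda>z. Re (z$i)) \<in> (trig_ring r :: (complex^'n::finite \<Rightarrow> real) set)"
    and "(\<lambda>z. Im (z$i)) \<in> (trig_ring r :: (complex^'n::finite \<Rightarrow> real) set)"
proof -
  let ?w = "axis i (1/r) :: real^'n"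
  have inner_w: "?w \<bullet> x = x$i / r" "(- ?w) \<bullet> x = - (x$i / r)" for x :: "real^'n"
    by (simp_all add: inner_axis')
  have cos: "(\<lambda>x. (1/2) * cis (?w \<bullet> x) + (1/2) * cis ((- ?w) \<bullet> x)) \<in> trig_poly"
    and sin: "(\<lambda>x. (- \<i>/2) * cis (?w \<bullet> x) + (\<i>/2) * cis ((- ?w) \<bullet> x)) \<in> trig_poly"
    by (intro trig_poly.intros)+
  show "(\<lambda>z. Re (z$i)) \<in> (trig_ring r :: (complex^'n \<Rightarrow> real) set)"
    unfolding trig_ring_def
  proof (intro CollectI conjI bexI[OF _ cos] allI)
    fix x :: "real^'n"
    show "complex_of_real (Re (torus_embedding r x $ i)) = (1/2) * cis (?w \<bullet> x) + (1/2) * cis ((- ?w) \<bullet> x)"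
      unfolding inner_w torus_embedding_def vec_lambda_beta cis.sel by (rule of_real_cos_cis)
  qed (intro continuous_intros)
  show "(\<lambda>z. Im (z$i)) \<in> (trig_ring r :: (complex^'n \<Rightarrow> real) set)"
    unfolding trig_ring_def
  proof (intro CollectI conjI bexI[OF _ sin] allI)
    fix x :: "real^'n"
    show "complex_of_real (Im (torus_embedding r x $ i)) = (- \<i>/2) * cis (?w \<bullet> x) + (\<i>/2) * cis ((- ?w) \<bullet> x)"
      unfolding inner_w torus_embedding_def vec_lambda_beta cis.sel by (rule of_real_sin_cis)
  qed (intro continuous_intros)
qed

lemma function_ring_on_trig_ring:
  assumes "r \<noteq> 0"
  shows "function_ring_on (trig_ring r) (torus :: (complex^'n::finite) set)"
proof unfold_locales
  fix f g :: "complex^'n \<Rightarrow> real" assume "f \<in> trig_ring r" "g \<in> trig_ring r"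
  then obtain p q where pq: "p \<in> trig_poly" "q \<in> trig_poly"
    "\<forall>x. complex_of_real (f (torus_embedding r x)) = p x"
    "\<forall>x. complex_of_real (g (torus_embedding r x)) = q x"
    "continuous_on torus f" "continuous_on torus g"
    by (auto simp: trig_ring_def)
  then show "(\<lambda>x. f x + g x) \<in> trig_ring r"
    unfolding trig_ring_def
    by (auto intro!: continuous_intros bexI[of _ "\<lambda>x. p x + q x"] trig_poly.trig_poly_add)
  from pq show "(\<lambda>x. f x * g x) \<in> trig_ring r"
    unfolding trig_ring_def
    by (auto intro!: continuous_intros bexI[of _ "\<lambda>x. p x * q x"] trig_poly_mult)
next
  fix c :: real
  have "(\<lambda>x. complex_of_real c * cis (0 \<bullet> x)) \<in> (trig_poly :: (real^'n \<Rightarrow> complex) set)"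
    by (intro trig_poly.intros)
  then show "(\<lambda>_. c) \<in> (trig_ring r :: (complex^'n \<Rightarrow> real) set)"
    unfolding trig_ring_def
    by (auto intro!: continuous_intros bexI[of _ "\<lambda>x. complex_of_real c * cis (0 \<bullet> x)"])
next
  fix z z' :: "complex^'n" assume "z \<noteq> z'"
  then obtain i where "z$i \<noteq> z'$i" by (auto simp: vec_eq_iff)
  then consider "Re (z$i) \<noteq> Re (z'$i)" | "Im (z$i) \<noteq> Im (z'$i)" by (meson complex_eqI)
  then show "\<exists>f\<in>trig_ring r. f z \<noteq> f z'"
  proof cases
    case 1
    with coordinate_in_trig_ring(1)[OF assms, of i] show ?thesis by (intro bexI[of _ "\<lambda>z. Re (z$i)"])
  next
    case 2
    with coordinate_in_trig_ring(2)[OF assms, of i] show ?thesis by (intro bexI[of _ "\<lambda>z. Im (z$i)"])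
  qed
next
  show "compact (torus :: (complex^'n) set)" by (rule compact_torus)
next
  show "continuous_on torus f" if "f \<in> trig_ring r" for f
    using that by (simp add: trig_ring_def)
qed

text \<open>Folding each coordinate by \<open>t \<mapsto> r \<cdot> arcsin (sin (t / r))\<close> fixes the cube \<open>cube r\<close> and
  factors through the torus embedding, so \<open>h \<circ> fold_into_cube r\<close> comes from a continuous
  function on the compact torus, where Stone-Weierstrass applies.\<close>

definition cube :: "real \<Rightarrow> (real^'n::finite) set" where
  "cube r = {x. \<forall>i. \<bar>x$i\<bar> \<le> r}"

definition fold_into_cube :: "real \<Rightarrow> real^'n::finite \<Rightarrow> real^'n" where
  "fold_into_cube r x = (\<chi> i. r * arcsin (sin (x$i / r)))"

lemma closed_cube: "closed (cube r)"
  unfolding cube_def by (intro closed_Collect_all closed_Collect_le continuous_intros)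

lemma sets_Compl_cube [measurable]: "- cube r \<in> sets borel"
  by (rule borel_open[OF open_Compl[OF closed_cube]])

lemma continuous_on_fold_into_cube: "continuous_on UNIV (fold_into_cube r :: real^'n::finite \<Rightarrow> _)"
  unfolding fold_into_cube_def divide_inverse by (intro continuous_intros) auto

lemma fold_into_cube_id:
  assumes "x \<in> cube r" "r > 0"
  shows "fold_into_cube r x = x"
proof -
  have "r * arcsin (sin (x$i / r)) = x$i" for i
  proof -
    have "\<bar>x$i / r\<bar> \<le> 1" using assms by (auto simp: cube_def abs_divide)
    moreover have "1 \<le> pi / 2" using pi_gt3 by simp
    ultimately have "-(pi/2) \<le> x$i / r" "x$i / r \<le> pi/2" unfolding abs_le_iff by linarith+
    then have "arcsin (sin (x$i / r)) = x$i / r" by (rule arcsin_sin)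
    then show ?thesis using assms(2) by simp
  qed
  then show ?thesis by (simp add: fold_into_cube_def vec_eq_iff)
qed

lemma fold_into_cube_through_torusE:
  fixes h :: "real^'n::finite \<Rightarrow> 'a::topological_space"
  assumes h: "continuous_on UNIV h"
  obtains G where "continuous_on torus G" "\<And>x. G (torus_embedding r x) = h (fold_into_cube r x)"
proof (rule that[of "\<lambda>z. h (\<chi> i. r * arcsin (Im (z$i)))"])
  have "-1 \<le> Im (z$i) \<and> Im (z$i) \<le> 1" if "z \<in> torus" for z :: "complex^'n" and i
    using that abs_Im_le_cmod[of "z$i"] by (auto simp: torus_def abs_le_iff)
  then have "continuous_on torus (\<lambda>z::complex^'n. (\<chi> i. r * arcsin (Im (z$i))) :: real^'n)"
    by (intro continuous_intros) auto
  then show "continuous_on torus (\<lambda>z. h (\<chi> i. r * arcsin (Im (z$i))))"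
    by (rule continuous_on_compose2[OF h]) auto
  show "h (\<chi> i. r * arcsin (Im (torus_embedding r x $ i))) = h (fold_into_cube r x)" for x
    by (simp add: torus_embedding_def fold_into_cube_def)
qed

lemma trig_poly_approx_folded:
  fixes h :: "real^'n::finite \<Rightarrow> complex"
  assumes h: "continuous_on UNIV h" and r: "r > 0" and e: "e > 0"
  obtains p where "p \<in> trig_poly" "\<And>x. norm (h (fold_into_cube r x) - p x) \<le> e"
proof -
  interpret function_ring_on "trig_ring r" "torus :: (complex^'n) set"
    by (rule function_ring_on_trig_ring) (use r in simp)
  obtain G where G: "continuous_on torus G" "\<And>x. G (torus_embedding r x) = h (fold_into_cube r x)"
    using fold_into_cube_through_torusE[OF h] by blast
  have ReG: "continuous_on torus (\<lambda>z. Re (G z))" and ImG: "continuous_on torus (\<lambda>z. Im (G z))"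
    using G(1) by (auto intro!: continuous_intros)
  have e2: "e / 2 > 0" using e by simp
  obtain f1 where f1: "f1 \<in> trig_ring r" "\<forall>z\<in>torus. \<bar>Re (G z) - f1 z\<bar> < e / 2"
    using Stone_Weierstrass_basic[OF ReG e2] by blast
  obtain f2 where f2: "f2 \<in> trig_ring r" "\<forall>z\<in>torus. \<bar>Im (G z) - f2 z\<bar> < e / 2"
    using Stone_Weierstrass_basic[OF ImG e2] by blast
  obtain p1 where p1: "p1 \<in> trig_poly" "\<forall>x. complex_of_real (f1 (torus_embedding r x)) = p1 x"
    using f1(1) by (auto simp: trig_ring_def)
  obtain p2 where p2: "p2 \<in> trig_poly" "\<forall>x. complex_of_real (f2 (torus_embedding r x)) = p2 x"
    using f2(1) by (auto simp: trig_ring_def)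
  show ?thesis
  proof (rule that)
    show "(\<lambda>x. 1 * p1 x + \<i> * p2 x) \<in> trig_poly"
      using p1(1) p2(1) by (intro trig_poly.intros)
    fix x :: "real^'n"
    let ?z = "torus_embedding r x"
    have "h (fold_into_cube r x) - (1 * p1 x + \<i> * p2 x)
        = complex_of_real (Re (G ?z) - f1 ?z) + \<i> * complex_of_real (Im (G ?z) - f2 ?z)"
      using G(2)[of x] p1(2) p2(2) by (simp add: complex_eq_iff)
    also have "norm \<dots> \<le> \<bar>Re (G ?z) - f1 ?z\<bar> + \<bar>Im (G ?z) - f2 ?z\<bar>"
      by (rule order_trans[OF norm_triangle_ineq]) (simp add: norm_mult of_real_diff[symmetric] del: of_real_diff)
    also have "\<dots> \<le> e" using f1(2) f2(2) torus_embedding_in_torus[of r x] by fastforce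
    finally show "norm (h (fold_into_cube r x) - (1 * p1 x + \<i> * p2 x)) \<le> e" .
  qed
qed

section \<open>A finite complex measure is determined by its Fourier transform\<close>

lemma tail_integral_small:
  fixes g :: "real^'n::finite \<Rightarrow> complex"
  assumes g: "integrable \<nu> g" and "sets \<nu> = sets borel" and e: "e > 0"
  obtains N :: nat where "\<And>n. n \<ge> N \<Longrightarrow> (\<integral>x. indicator (- cube (real n)) x * norm (g x) \<partial>\<nu>) < e"
proof -
  have cube_sets: "- cube r \<in> sets \<nu>" for r
    using assms(2) by simp
  have "(\<lambda>n. \<integral>x. indicator (- cube (real n)) x * norm (g x) \<partial>\<nu>) \<longlonglongrightarrow> (\<integral>x. 0 \<partial>\<nu>)"
  proof (rule integral_dominated_convergence[where w="\<lambda>x. norm (g x)"])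
    show "(\<lambda>x. indicator (- cube (real n)) x * norm (g x)) \<in> borel_measurable \<nu>" for n
      using cube_sets g by measurable
    show "AE x in \<nu>. (\<lambda>n. indicator (- cube (real n)) x * norm (g x)) \<longlonglongrightarrow> 0"
    proof (intro AE_I2 tendsto_eventually eventually_sequentiallyI)
      fix x :: "real^'n" and n assume "nat \<lceil>norm x\<rceil> \<le> n"
      then have "norm x \<le> real n" by linarith
      then have "x \<in> cube (real n)"
        using component_le_norm_cart[of x] unfolding cube_def by (auto intro: order_trans)
      then show "indicator (- cube (real n)) x * norm (g x) = 0" by simp
    qed
  qed (use g in \<open>auto simp: indicator_def\<close>)
  then have "(\<lambda>n. \<integral>x. indicator (- cube (real n)) x * norm (g x) \<partial>\<nu>) \<longlonglongrightarrow> 0" by simp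
  from order_tendstoD(2)[OF this e] show ?thesis
    using that by (auto simp: eventually_sequentially)
qed

lemma norm_cint_diff_fold_into_cube_le:
  fixes g :: "real^'n::finite \<Rightarrow> complex"
  assumes g: "integrable \<nu> g" and \<nu>: "sets \<nu> = sets borel"
    and h: "continuous_on UNIV h" and hB: "\<And>x. norm (h x) \<le> B"
    and r: "r > 0" and tail: "(\<integral>x. indicator (- cube r) x * norm (g x) \<partial>\<nu>) < e"
  shows "norm (cint (\<nu>, g) (\<lambda>x. h x - h (fold_into_cube r x))) \<le> 2 * B * e"
proof -
  have B: "0 \<le> B" using order_trans[OF norm_ge_zero hB] .
  have "bounded_borel (\<lambda>x. h x - h (fold_into_cube r x))"
    using hB by (intro bounded_borel_diff bounded_borel_continuous[OF h]
        bounded_borel_continuous[where B=B] continuous_on_compose2[OF h continuous_on_fold_into_cube]) auto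
  note int = integrable_norm_bounded_borel_mult[OF g \<nu> this]
  have cube_sets: "- cube r \<in> sets \<nu>" using \<nu> by simp
  have "norm (cint (\<nu>, g) (\<lambda>x. h x - h (fold_into_cube r x)))
      \<le> (\<integral>x. norm (h x - h (fold_into_cube r x)) * norm (g x) \<partial>\<nu>)"
    using norm_cint_le[of "(\<nu>, g)"] by simp
  also have "\<dots> \<le> (\<integral>x. (2 * B) * (indicator (- cube r) x * norm (g x)) \<partial>\<nu>)"
  proof (rule integral_mono)
    show "integrable \<nu> (\<lambda>x. norm (h x - h (fold_into_cube r x)) * norm (g x))"
      by (fact int)
    show "integrable \<nu> (\<lambda>x. (2 * B) * (indicator (- cube r) x * norm (g x)))"
      using integrable_real_mult_indicator[OF cube_sets integrable_norm[OF g]]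
      by (intro integrable_mult_right) (simp add: mult.commute)
    fix x
    have "norm (h x - h (fold_into_cube r x)) \<le> 2 * B"
      using hB[of x] hB[of "fold_into_cube r x"] norm_triangle_ineq4[of "h x" "h (fold_into_cube r x)"] by simp
    then show "norm (h x - h (fold_into_cube r x)) * norm (g x) \<le> (2 * B) * (indicator (- cube r) x * norm (g x))"
      using fold_into_cube_id[OF _ r, of x] by (cases "x \<in> cube r") (auto intro: mult_right_mono)
  qed
  also have "\<dots> \<le> 2 * B * e" using tail B by (simp add: mult_left_mono)
  finally show ?thesis .
qed

lemma norm_cint_sub_trig_poly_le:
  assumes \<mu>: "\<mu> = (\<nu>, g)" "\<mu> \<in> cmeas"
    and h: "continuous_on UNIV h" and hB: "\<And>x. norm (h x) \<le> B"
    and r: "r > 0" and tail: "(\<integral>x. indicator (- cube r) x * norm (g x) \<partial>\<nu>) < e"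
    and p: "p \<in> trig_poly" "\<And>x. norm (h (fold_into_cube r x) - p x) \<le> e"
  shows "norm (cint \<mu> h - cint \<mu> p) \<le> 2 * B * e + e * (\<integral>x. norm (g x) \<partial>\<nu>)"
proof -
  have \<nu>: "sets \<nu> = sets borel" "integrable \<nu> g" using \<mu> by (auto elim: cmeasE)
  have hr: "bounded_borel (\<lambda>x. h (fold_into_cube r x))"
    using hB by (intro bounded_borel_continuous[where B=B]
        continuous_on_compose2[OF h continuous_on_fold_into_cube]) auto
  have bb: "bounded_borel h" "bounded_borel p"
    using bounded_borel_continuous[OF h hB] bounded_borel_trig_poly[OF p(1)] .
  have "cint \<mu> h - cint \<mu> p
      = cint \<mu> (\<lambda>x. h x - h (fold_into_cube r x)) + cint \<mu> (\<lambda>x. h (fold_into_cube r x) - p x)"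
    using \<mu>(2) hr bb by (simp add: cint_diff)
  also have "norm \<dots> \<le> 2 * B * e + e * (\<integral>x. norm (g x) \<partial>\<nu>)"
    using norm_cint_diff_fold_into_cube_le[OF \<nu>(2,1) h hB r tail]
      norm_cint_le_bound[OF \<mu>(2) bounded_borel_diff[OF hr bb(2)] p(2)] \<mu>(1)
    by (intro order_trans[OF norm_triangle_ineq add_mono]) auto
  finally show ?thesis .
qed

lemma cint_eq_if_fourier_eq:
  assumes \<mu>: "\<mu> \<in> cmeas" and \<mu>': "\<mu>' \<in> cmeas"
    and fourier: "\<And>w. cint \<mu> (\<lambda>x. cis (w \<bullet> x)) = cint \<mu>' (\<lambda>x. cis (w \<bullet> x))"
    and h: "continuous_on UNIV h" and hB: "\<And>x. norm (h x) \<le> B"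
  shows "cint \<mu> h = cint \<mu>' h"
proof -
  obtain \<nu> g where m: "\<mu> = (\<nu>, g)" "sets \<nu> = sets borel" "integrable \<nu> g"
    using \<mu> by (elim cmeasE) blast
  obtain \<nu>' g' where m': "\<mu>' = (\<nu>', g')" "sets \<nu>' = sets borel" "integrable \<nu>' g'"
    using \<mu>' by (elim cmeasE) blast
  define K where "K = 4 * B + (\<integral>x. norm (g x) \<partial>\<nu>) + (\<integral>x. norm (g' x) \<partial>\<nu>')"
  have bound: "norm (cint \<mu> h - cint \<mu>' h) \<le> e * K" if e: "e > 0" for e
  proof -
    obtain N1 where N1: "\<And>n. n \<ge> N1 \<Longrightarrow> (\<integral>x. indicator (- cube (real n)) x * norm (g x) \<partial>\<nu>) < e"
      using tail_integral_small[OF m(3,2) e] by blast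
    obtain N2 where N2: "\<And>n. n \<ge> N2 \<Longrightarrow> (\<integral>x. indicator (- cube (real n)) x * norm (g' x) \<partial>\<nu>') < e"
      using tail_integral_small[OF m'(3,2) e] by blast
    define r where "r = real (Suc (max N1 N2))"
    have r: "r > 0" by (simp add: r_def)
    have tails: "(\<integral>x. indicator (- cube r) x * norm (g x) \<partial>\<nu>) < e"
        "(\<integral>x. indicator (- cube r) x * norm (g' x) \<partial>\<nu>') < e"
      using N1[of "Suc (max N1 N2)"] N2[of "Suc (max N1 N2)"] by (simp_all add: r_def)
    obtain p where p: "p \<in> trig_poly" "\<And>x. norm (h (fold_into_cube r x) - p x) \<le> e"
      using trig_poly_approx_folded[OF h r e] by blast
    have "cint \<mu> h - cint \<mu>' h = (cint \<mu> h - cint \<mu> p) - (cint \<mu>' h - cint \<mu>' p)"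
      using cint_trig_poly_eq[OF \<mu> \<mu>' fourier p(1)] by simp
    also have "norm \<dots> \<le> (2 * B * e + e * (\<integral>x. norm (g x) \<partial>\<nu>)) + (2 * B * e + e * (\<integral>x. norm (g' x) \<partial>\<nu>'))"
      using norm_cint_sub_trig_poly_le[OF m(1) \<mu> h hB r tails(1) p]
        norm_cint_sub_trig_poly_le[OF m'(1) \<mu>' h hB r tails(2) p]
      by (rule order_trans[OF norm_triangle_ineq4 add_mono])
    also have "\<dots> = e * K" by (simp add: K_def algebra_simps)
    finally show ?thesis .
  qed
  have "((\<lambda>e. e * K) \<longlongrightarrow> 0 * K) (at_right 0)" by (intro tendsto_intros)
  then have "norm (cint \<mu> h - cint \<mu>' h) \<le> 0 * K"
    using bound by (rule tendsto_lowerbound[OF _ eventually_at_rightI[of 0 1]]) auto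
  then show ?thesis by simp
qed

definition add_measure :: "'a measure \<Rightarrow> 'a measure \<Rightarrow> 'a measure" where
  "add_measure N1 N2 = measure_of (space N1) (sets N1) (\<lambda>A. emeasure N1 A + emeasure N2 A)"

lemma sets_add_measure: "sets (add_measure N1 N2) = sets N1"
  unfolding add_measure_def by (rule sets.sets_measure_of_eq)

lemma emeasure_add_measure:
  assumes "sets N2 = sets N1" "A \<in> sets N1"
  shows "emeasure (add_measure N1 N2) A = emeasure N1 A + emeasure N2 A"
  unfolding add_measure_def
proof (rule emeasure_measure_of_sigma[OF sets.sigma_algebra_axioms _ _ assms(2)])
  show "positive (sets N1) (\<lambda>A. emeasure N1 A + emeasure N2 A)" by (simp add: positive_def)
  show "countably_additive (sets N1) (\<lambda>A. emeasure N1 A + emeasure N2 A)"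
    unfolding countably_additive_def
  proof safe
    fix F :: "nat \<Rightarrow> _" assume F: "range F \<subseteq> sets N1" "disjoint_family F"
    then have "range F \<subseteq> sets N2" using assms(1) by simp
    then show "(\<Sum>i. emeasure N1 (F i) + emeasure N2 (F i)) = emeasure N1 (\<Union> (range F)) + emeasure N2 (\<Union> (range F))"
      using suminf_emeasure[OF F] suminf_emeasure[OF _ F(2)] by (simp add: suminf_add[symmetric])
  qed
qed

lemma finite_measure_add_measure:
  assumes "finite_measure N1" "finite_measure N2" "sets N2 = sets N1"
  shows "finite_measure (add_measure N1 N2)"
proof
  interpret N1: finite_measure N1 by fact
  interpret N2: finite_measure N2 by fact
  have "space (add_measure N1 N2) = space N1" "space N2 = space N1"
    by (rule sets_eq_imp_space_eq[OF sets_add_measure], rule sets_eq_imp_space_eq[OF assms(3)])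
  then show "emeasure (add_measure N1 N2) (space (add_measure N1 N2)) \<noteq> \<infinity>"
    using emeasure_add_measure[OF assms(3) sets.top] N1.emeasure_finite N2.emeasure_finite
    by (simp add: ennreal_add_eq_top)
qed

lemma absolutely_continuous_add_measure:
  assumes "sets N2 = sets N1"
  shows "absolutely_continuous (add_measure N1 N2) N1" "absolutely_continuous (add_measure N1 N2) N2"
  unfolding absolutely_continuous_def using emeasure_add_measure[OF assms] assms
  by (auto simp: null_sets_def sets_add_measure)

lemma real_densityE:
  assumes "finite_measure N" "finite_measure M" "sets M = sets N" "absolutely_continuous N M"
  obtains r where "r \<in> borel_measurable N" "\<And>x. 0 \<le> r x" "M = density N (\<lambda>x. ennreal (r x))"
proof
  interpret finite_measure N by fact
  interpret M: finite_measure M by fact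
  have "M = density N (RN_deriv N M)" using density_RN_deriv[OF assms(4,3)] by simp
  also have "\<dots> = density N (\<lambda>x. ennreal (enn2real (RN_deriv N M x)))"
  proof (rule density_cong)
    from RN_deriv_finite[OF M.sigma_finite_measure_axioms assms(4,3)]
    show "AE x in N. RN_deriv N M x = ennreal (enn2real (RN_deriv N M x))"
      by eventually_elim (auto simp: less_top)
  qed auto
  finally show "M = density N (\<lambda>x. ennreal (enn2real (RN_deriv N M x)))" .
qed auto

definition cmeas_sum :: "'n::finite cmeas \<Rightarrow> 'n cmeas \<Rightarrow> 'n cmeas \<Rightarrow> bool" where
  "cmeas_sum \<mu> \<mu>1 \<mu>2 \<longleftrightarrow> (\<forall>h \<in> borel_measurable borel.
     integrable (fst \<mu>1) (\<lambda>x. h x * snd \<mu>1 x) \<longrightarrow> integrable (fst \<mu>2) (\<lambda>x. h x * snd \<mu>2 x) \<longrightarrow>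
     cint \<mu> h = cint \<mu>1 h + cint \<mu>2 h)"

lemma integral_real_density_scaleR:
  fixes F :: "'a \<Rightarrow> complex"
  assumes "N = density N3 (\<lambda>x. ennreal (r x))" "r \<in> borel_measurable N3" "\<And>x. 0 \<le> r x"
    and "F \<in> borel_measurable N3"
  shows "integrable N F \<longleftrightarrow> integrable N3 (\<lambda>x. r x *\<^sub>R F x)"
    and "integral\<^sup>L N F = (\<integral>x. r x *\<^sub>R F x \<partial>N3)"
  using integrable_density[OF assms(4,2)] integral_density[OF assms(4,2)] assms(1,3) by auto

text \<open>\<open>\<mu>\<^sub>1 + \<mu>\<^sub>2\<close> is represented with respect to \<open>N\<^sub>1 + N\<^sub>2\<close>, against which both \<open>N\<^sub>i\<close> have
  Radon-Nikodym densities.\<close>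

lemma cmeas_sumE:
  assumes "\<mu>1 \<in> cmeas" "\<mu>2 \<in> cmeas"
  obtains \<mu> where "\<mu> \<in> cmeas" "cmeas_sum \<mu> \<mu>1 \<mu>2"
proof -
  obtain N1 g1 where m1: "\<mu>1 = (N1, g1)" "finite_measure N1" "sets N1 = sets borel"
    "g1 \<in> borel_measurable borel" "integrable N1 g1"
    using assms(1) by (elim cmeasE) blast
  obtain N2 g2 where m2: "\<mu>2 = (N2, g2)" "finite_measure N2" "sets N2 = sets borel"
    "g2 \<in> borel_measurable borel" "integrable N2 g2"
    using assms(2) by (elim cmeasE) blast
  have sets_N2: "sets N2 = sets N1" using m1(3) m2(3) by simp
  define N where "N = add_measure N1 N2"
  have N: "sets N = sets borel" using m1(3) by (simp add: N_def sets_add_measure)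
  have "finite_measure N"
    unfolding N_def using m1(2) m2(2) sets_N2 by (rule finite_measure_add_measure)
  moreover have "absolutely_continuous N N1" "absolutely_continuous N N2"
    unfolding N_def using absolutely_continuous_add_measure[OF sets_N2] by auto
  ultimately obtain r1 r2 where
    r1: "r1 \<in> borel_measurable N" "\<And>x. 0 \<le> r1 x" "N1 = density N (\<lambda>x. ennreal (r1 x))" and
    r2: "r2 \<in> borel_measurable N" "\<And>x. 0 \<le> r2 x" "N2 = density N (\<lambda>x. ennreal (r2 x))"
    using real_densityE[of N N1] real_densityE[of N N2] N m1(2,3) m2(2,3) by metis
  have meq: "borel_measurable N = borel_measurable borel" by (rule measurable_cong_sets[OF N refl])
  note [measurable] = r1(1)[unfolded meq] r2(1)[unfolded meq] m1(4) m2(4)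
  note I1 = integral_real_density_scaleR[OF r1(3,1,2)]
  note I2 = integral_real_density_scaleR[OF r2(3,1,2)]
  define g where "g x = r1 x *\<^sub>R g1 x + r2 x *\<^sub>R g2 x" for x
  have "g \<in> borel_measurable borel" unfolding g_def by measurable
  moreover have "integrable N g"
    unfolding g_def using I1(1)[of g1] I2(1)[of g2] m1(5) m2(5) by (simp add: meq)
  ultimately have "(N, g) \<in> cmeas" using \<open>finite_measure N\<close> N by (simp add: cmeas_def)
  moreover have "cmeas_sum (N, g) \<mu>1 \<mu>2"
    unfolding cmeas_sum_def
  proof (intro ballI impI)
    fix h :: "real^'a \<Rightarrow> complex"
    assume [measurable]: "h \<in> borel_measurable borel"
      and "integrable (fst \<mu>1) (\<lambda>x. h x * snd \<mu>1 x)" "integrable (fst \<mu>2) (\<lambda>x. h x * snd \<mu>2 x)"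
    then have "integrable N (\<lambda>x. r1 x *\<^sub>R (h x * g1 x))" "integrable N (\<lambda>x. r2 x *\<^sub>R (h x * g2 x))"
      using I1(1)[of "\<lambda>x. h x * g1 x"] I2(1)[of "\<lambda>x. h x * g2 x"] m1(1) m2(1) by (simp_all add: meq)
    then have "cint (N, g) h = (\<integral>x. r1 x *\<^sub>R (h x * g1 x) \<partial>N) + (\<integral>x. r2 x *\<^sub>R (h x * g2 x) \<partial>N)"
      unfolding cint_def g_def by (simp add: algebra_simps)
    also have "\<dots> = cint \<mu>1 h + cint \<mu>2 h"
      using I1(2)[of "\<lambda>x. h x * g1 x"] I2(2)[of "\<lambda>x. h x * g2 x"] m1(1) m2(1) by (simp add: cint_def meq)
    finally show "cint (N, g) h = cint \<mu>1 h + cint \<mu>2 h" .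
  qed
  ultimately show ?thesis using that by blast
qed

section \<open>Convolution with a probability density\<close>

lemma integral_lborel_translate:
  fixes F :: "'a::euclidean_space \<Rightarrow> 'b::{banach, second_countable_topology}"
  assumes [measurable]: "F \<in> borel_measurable borel"
  shows "(\<integral>y. F y \<partial>lborel) = (\<integral>u. F (x + u) \<partial>lborel)"
proof -
  have "(\<integral>y. F y \<partial>lborel) = (\<integral>y. F y \<partial>distr lborel borel ((+) x))" by (simp add: lborel_distr_plus)
  also have "\<dots> = (\<integral>u. F (x + u) \<partial>lborel)" by (rule integral_distr) auto
  finally show ?thesis .
qed

lemma nn_integral_lborel_translate:
  fixes F :: "'a::euclidean_space \<Rightarrow> ennreal"
  assumes [measurable]: "F \<in> borel_measurable borel"
  shows "(\<integral>\<^sup>+y. F y \<partial>lborel) = (\<integral>\<^sup>+u. F (x + u) \<partial>lborel)"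
proof -
  have "(\<integral>\<^sup>+y. F y \<partial>lborel) = (\<integral>\<^sup>+y. F y \<partial>distr lborel borel ((+) x))" by (simp add: lborel_distr_plus)
  also have "\<dots> = (\<integral>\<^sup>+u. F (x + u) \<partial>lborel)" by (rule nn_integral_distr) auto
  finally show ?thesis .
qed

lemma isCont_cint_cis:
  assumes "\<mu> \<in> cmeas"
  shows "isCont (\<lambda>w. cint \<mu> (\<lambda>x. cis (w \<bullet> x))) w"
  unfolding continuous_at_sequentially
proof safe
  obtain \<nu> g where m: "\<mu> = (\<nu>, g)" "g \<in> borel_measurable \<nu>" "integrable \<nu> g" "sets \<nu> = sets borel"
    using assms by (elim cmeasE) blast
  have [measurable]: "(\<lambda>x. cis (w \<bullet> x)) \<in> borel_measurable \<nu>" for w :: "real^'a"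
    using m(4) by simp
  fix X :: "nat \<Rightarrow> real^'a" assume X: "X \<longlonglongrightarrow> w"
  show "((\<lambda>w. cint \<mu> (\<lambda>x. cis (w \<bullet> x))) \<circ> X) \<longlonglongrightarrow> cint \<mu> (\<lambda>x. cis (w \<bullet> x))"
    unfolding comp_def cint_def m(1) fst_conv snd_conv
  proof (rule integral_dominated_convergence[where w="\<lambda>x. norm (g x)"])
    show "AE x in \<nu>. (\<lambda>i. cis (X i \<bullet> x) * g x) \<longlonglongrightarrow> cis (w \<bullet> x) * g x"
      using X by (intro AE_I2 tendsto_intros)
  qed (use m(2,3) in \<open>auto simp: norm_mult\<close>)
qed

definition fourier_density :: "(real^'n::finite \<Rightarrow> real) \<Rightarrow> real^'n \<Rightarrow> complex" where
  "fourier_density f w = (\<integral>u. complex_of_real (f u) * cis (w \<bullet> u) \<partial>lborel)"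

locale convolution_kernel =
  fixes fV :: "real^'n::finite \<Rightarrow> real"
  assumes borel_measurable_kernel [measurable]: "fV \<in> borel_measurable borel"
    and kernel_nonneg: "\<And>x. 0 \<le> fV x"
    and nn_integral_kernel: "(\<integral>\<^sup>+x. ennreal (fV x) \<partial>lborel) = 1"
begin

lemma integrable_conv_kernel:
  assumes \<mu>: "(\<nu>, g) \<in> cmeas"
    and [measurable]: "k \<in> borel_measurable borel" and k: "\<And>y. norm (k y) \<le> 1"
  shows "integrable (\<nu> \<Otimes>\<^sub>M lborel) (\<lambda>(x, y). k y * (complex_of_real (fV (y - x)) * g x))"
proof -
  obtain \<nu>: "sets \<nu> = sets borel" "finite_measure \<nu>" and [measurable]: "g \<in> borel_measurable borel"
    and g: "integrable \<nu> g"
    using \<mu> by (auto simp: cmeas_def)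
  interpret finite_measure \<nu> by (rule \<nu>(2))
  interpret pair_sigma_finite \<nu> lborel ..
  have meq: "borel_measurable (\<nu> \<Otimes>\<^sub>M lborel) = borel_measurable (borel \<Otimes>\<^sub>M borel)"
    by (rule measurable_cong_sets[OF sets_pair_measure_cong[OF \<nu>(1) sets_lborel] refl])
  show ?thesis
    unfolding integrable_iff_bounded
  proof
    show "(\<lambda>(x, y). k y * (complex_of_real (fV (y - x)) * g x)) \<in> borel_measurable (\<nu> \<Otimes>\<^sub>M lborel)"
      unfolding meq by measurable
    have "(\<integral>\<^sup>+z. ennreal (norm (case z of (x, y) \<Rightarrow> k y * (complex_of_real (fV (y - x)) * g x))) \<partial>(\<nu> \<Otimes>\<^sub>M lborel))
        \<le> (\<integral>\<^sup>+z. ennreal (fV (snd z - fst z)) * ennreal (norm (g (fst z))) \<partial>(\<nu> \<Otimes>\<^sub>M lborel))"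
      using k kernel_nonneg
      by (intro nn_integral_mono) (auto simp: norm_mult ennreal_mult'[symmetric] intro!: ennreal_leI mult_left_le_one_le)
    also have "\<dots> = (\<integral>\<^sup>+x. \<integral>\<^sup>+y. ennreal (fV (y - x)) * ennreal (norm (g x)) \<partial>lborel \<partial>\<nu>)"
      by (subst lborel.nn_integral_fst[symmetric]) (auto simp: meq)
    also have "\<dots> = (\<integral>\<^sup>+x. ennreal (norm (g x)) \<partial>\<nu>)"
    proof (rule nn_integral_cong)
      fix x
      have "(\<integral>\<^sup>+y. ennreal (fV (y - x)) \<partial>lborel) = (\<integral>\<^sup>+u. ennreal (fV (x + u - x)) \<partial>lborel)"
        by (rule nn_integral_lborel_translate) measurable
      then show "(\<integral>\<^sup>+y. ennreal (fV (y - x)) * ennreal (norm (g x)) \<partial>lborel) = ennreal (norm (g x))"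
        using nn_integral_kernel by (simp add: nn_integral_multc)
    qed
    also have "\<dots> < \<infinity>" using g by (simp add: integrable_iff_bounded)
    finally show "(\<integral>\<^sup>+z. ennreal (norm (case z of (x, y) \<Rightarrow> k y * (complex_of_real (fV (y - x)) * g x))) \<partial>(\<nu> \<Otimes>\<^sub>M lborel)) < \<infinity>" .
  qed
qed

lemma AE_integrable_conv_kernel:
  assumes "\<mu> \<in> cmeas"
  shows "AE y in lborel. integrable (fst \<mu>) (\<lambda>x. complex_of_real (fV (y - x)) * snd \<mu> x)"
proof -
  obtain \<nu> g where \<mu>: "\<mu> = (\<nu>, g)" "finite_measure \<nu>"
    using assms by (elim cmeasE) blast
  interpret finite_measure \<nu> by (rule \<mu>(2))
  interpret pair_sigma_finite \<nu> lborel ..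
  have "integrable (\<nu> \<Otimes>\<^sub>M lborel) (\<lambda>(x, y). 1 * (complex_of_real (fV (y - x)) * g x))"
    using assms \<mu>(1) by (intro integrable_conv_kernel) auto
  from AE_integrable_snd[OF this] show ?thesis using \<mu>(1) by simp
qed

lemma borel_measurable_conv_op:
  assumes "\<mu> \<in> cmeas"
  shows "conv_op fV \<mu> \<in> borel_measurable borel"
proof -
  obtain \<nu> g where \<mu>: "\<mu> = (\<nu>, g)" "finite_measure \<nu>" "sets \<nu> = sets borel"
    and [measurable]: "g \<in> borel_measurable borel"
    using assms by (elim cmeasE) blast
  interpret finite_measure \<nu> by (rule \<mu>(2))
  have meq: "borel_measurable (borel \<Otimes>\<^sub>M \<nu>) = borel_measurable (borel \<Otimes>\<^sub>M borel)"
    by (rule measurable_cong_sets[OF sets_pair_measure_cong[OF refl \<mu>(3)] refl])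
  have "(\<lambda>(y, x). complex_of_real (fV (y - x)) * g x) \<in> borel_measurable (borel \<Otimes>\<^sub>M \<nu>)"
    unfolding meq by measurable
  then have "(\<lambda>y. \<integral>x. complex_of_real (fV (y - x)) * g x \<partial>\<nu>) \<in> borel_measurable borel"
    by (rule borel_measurable_lebesgue_integral[where f="\<lambda>y x. complex_of_real (fV (y - x)) * g x", simplified])
  then show ?thesis by (simp add: conv_op_def cint_def \<mu>(1))
qed

lemma integral_cis_conv_op:
  assumes "\<mu> \<in> cmeas"
  shows "(\<integral>y. cis (w \<bullet> y) * conv_op fV \<mu> y \<partial>lborel) = fourier_density fV w * cint \<mu> (\<lambda>x. cis (w \<bullet> x))"
proof -
  obtain \<nu> g where \<mu>: "\<mu> = (\<nu>, g)" "finite_measure \<nu>"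
    using assms by (elim cmeasE) blast
  interpret finite_measure \<nu> by (rule \<mu>(2))
  interpret pair_sigma_finite \<nu> lborel ..
  have int: "integrable (\<nu> \<Otimes>\<^sub>M lborel) (\<lambda>(x, y). cis (w \<bullet> y) * (complex_of_real (fV (y - x)) * g x))"
    using assms \<mu>(1) by (intro integrable_conv_kernel) auto
  have "(\<integral>y. cis (w \<bullet> y) * conv_op fV \<mu> y \<partial>lborel)
      = (\<integral>y. \<integral>x. cis (w \<bullet> y) * (complex_of_real (fV (y - x)) * g x) \<partial>\<nu> \<partial>lborel)"
    by (simp add: conv_op_def cint_def \<mu>(1))
  also have "\<dots> = (\<integral>x. \<integral>y. cis (w \<bullet> y) * (complex_of_real (fV (y - x)) * g x) \<partial>lborel \<partial>\<nu>)"
    by (rule Fubini_integral[OF int])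
  also have "\<dots> = (\<integral>x. fourier_density fV w * (cis (w \<bullet> x) * g x) \<partial>\<nu>)"
  proof (rule Bochner_Integration.integral_cong[OF refl])
    fix x
    have "(\<integral>y. cis (w \<bullet> y) * (complex_of_real (fV (y - x)) * g x) \<partial>lborel)
        = (\<integral>y. cis (w \<bullet> y) * complex_of_real (fV (y - x)) \<partial>lborel) * g x"
      by (subst integral_mult_left_zero[symmetric]) (simp add: mult.assoc)
    also have "(\<integral>y. cis (w \<bullet> y) * complex_of_real (fV (y - x)) \<partial>lborel)
        = (\<integral>u. cis (w \<bullet> (x + u)) * complex_of_real (fV (x + u - x)) \<partial>lborel)"
      by (rule integral_lborel_translate) measurable
    also have "\<dots> = (\<integral>u. cis (w \<bullet> x) * (complex_of_real (fV u) * cis (w \<bullet> u)) \<partial>lborel)"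
      by (simp add: inner_add_right cis_mult[symmetric] ac_simps)
    also have "\<dots> = cis (w \<bullet> x) * fourier_density fV w"
      by (simp add: fourier_density_def)
    finally show "(\<integral>y. cis (w \<bullet> y) * (complex_of_real (fV (y - x)) * g x) \<partial>lborel)
        = fourier_density fV w * (cis (w \<bullet> x) * g x)"
      by (simp add: ac_simps)
  qed
  also have "\<dots> = fourier_density fV w * cint \<mu> (\<lambda>x. cis (w \<bullet> x))" by (simp add: cint_def \<mu>(1))
  finally show ?thesis .
qed

lemma conv_op_add_ae:
  assumes "\<mu>1 \<in> cmeas" "\<mu>2 \<in> cmeas" "cmeas_sum \<mu> \<mu>1 \<mu>2"
  shows "AE y in lborel. conv_op fV \<mu> y = conv_op fV \<mu>1 y + conv_op fV \<mu>2 y"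
  using AE_integrable_conv_kernel[OF assms(1)] AE_integrable_conv_kernel[OF assms(2)]
proof eventually_elim
  case (elim y)
  then show ?case using assms(3) by (simp add: conv_op_def cmeas_sum_def)
qed

end

section \<open>The deconvolution functional\<close>

lemma C0_continuous: "lam \<in> C0 \<Longrightarrow> continuous_on UNIV lam"
  by (simp add: C0_def)

lemma vanishing_at_infinity_boundedE:
  fixes f :: "'a::{real_normed_vector, heine_borel} \<Rightarrow> 'b::real_normed_vector"
  assumes f: "continuous_on UNIV f" "(f \<longlongrightarrow> 0) at_infinity"
  obtains B where "B > 0" "\<And>x. norm (f x) \<le> B"
proof -
  have "((\<lambda>x. norm (f x)) \<longlongrightarrow> 0) at_infinity"
    using f(2) by (simp add: tendsto_norm_zero)
  then have "eventually (\<lambda>x. norm (f x) < 1) at_infinity"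
    by (rule order_tendstoD(2)) simp
  then obtain b where b: "\<And>x. b \<le> norm x \<Longrightarrow> norm (f x) < 1"
    by (auto simp: eventually_at_infinity)
  have "compact (f ` cball 0 b)"
    using f(1) by (intro compact_continuous_image) (auto intro: continuous_on_subset)
  then obtain B where B: "\<forall>x\<in>cball 0 b. norm (f x) \<le> B"
    by (auto dest!: compact_imp_bounded simp: bounded_iff)
  show ?thesis
  proof (rule that[of "max 1 B"])
    show "norm (f x) \<le> max 1 B" for x
      using b[of x] B by (cases "b \<le> norm x") (auto simp: dist_norm intro: le_max_iff_disj[THEN iffD2])
  qed simp
qed

lemma C0_boundedE:
  assumes "lam \<in> C0"
  obtains B where "B > 0" "\<And>x. norm (lam x) \<le> B"
  using vanishing_at_infinity_boundedE[of lam] assms by (auto simp: C0_def)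

lemma bounded_borel_C0: "lam \<in> C0 \<Longrightarrow> bounded_borel lam"
  by (metis C0_boundedE C0_continuous bounded_borel_continuous)

lemma norm_cint_le_tv_norm:
  assumes \<mu>: "\<mu> \<in> cmeas" and lam: "lam \<in> C0" "B > 0" "\<And>x. norm (lam x) \<le> B"
  shows "norm (cint \<mu> lam) \<le> B * tv_norm \<mu>"
proof -
  define S where "S = {h \<in> (C0 :: (real^'a \<Rightarrow> complex) set). \<forall>x. norm (h x) \<le> 1}"
  define h where "h = (\<lambda>x. complex_of_real (1 / B) * lam x)"
  have "h \<in> S"
  proof -
    have "continuous_on UNIV h" unfolding h_def using C0_continuous[OF lam(1)] by (intro continuous_intros)
    moreover have "((\<lambda>x. complex_of_real (1 / B) * lam x) \<longlongrightarrow> complex_of_real (1 / B) * 0) at_infinity"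
      using lam(1) by (intro tendsto_intros) (simp add: C0_def)
    moreover have "norm (h x) \<le> 1" for x
      using lam(2) lam(3)[of x] by (simp add: h_def norm_mult norm_divide)
    ultimately show ?thesis by (simp add: S_def C0_def h_def)
  qed
  moreover have "bdd_above ((\<lambda>h. norm (cint \<mu> h)) ` S)"
  proof (rule bdd_aboveI2)
    fix k assume "k \<in> S"
    then have "bounded_borel k" "\<And>x. norm (k x) \<le> 1"
      by (auto simp: S_def intro: bounded_borel_C0)
    from norm_cint_le_bound[OF \<mu> this]
    show "norm (cint \<mu> k) \<le> 1 * (\<integral>x. norm (snd \<mu> x) \<partial>fst \<mu>)" .
  qed
  ultimately have "norm (cint \<mu> h) \<le> tv_norm \<mu>"
    unfolding tv_norm_def S_def[symmetric] by (rule cSUP_upper)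
  moreover have "cint \<mu> h = complex_of_real (1 / B) * cint \<mu> lam" unfolding h_def by (rule cint_cmult)
  ultimately show ?thesis using lam(2) by (simp add: norm_mult norm_divide field_simps)
qed

locale deconvolution_kernel = convolution_kernel fV for fV :: "real^'n::finite \<Rightarrow> real" +
  assumes fourier_density_nonzero: "AE w in lborel. fourier_density fV w \<noteq> 0"
begin

text \<open>The set where the Fourier transforms of \<open>\<mu>\<close> and \<open>\<mu>'\<close> differ is open, and it is null because
  there \<open>\<phi>\<^sub>V = 0\<close>; so it is empty.\<close>

lemma cint_eq_if_conv_op_ae_eq:
  assumes \<mu>: "\<mu> \<in> cmeas" and \<mu>': "\<mu>' \<in> cmeas"
    and eq: "AE y in lborel. conv_op fV \<mu> y = conv_op fV \<mu>' y"
    and h: "continuous_on UNIV h" "\<And>x. norm (h x) \<le> B"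
  shows "cint \<mu> h = cint \<mu>' h"
proof (rule cint_eq_if_fourier_eq[OF \<mu> \<mu>' _ h])
  define U where "U = {w. cint \<mu> (\<lambda>x. cis (w \<bullet> x)) \<noteq> cint \<mu>' (\<lambda>x. cis (w \<bullet> x))}"
  have "fourier_density fV w * cint \<mu> (\<lambda>x. cis (w \<bullet> x)) = fourier_density fV w * cint \<mu>' (\<lambda>x. cis (w \<bullet> x))"
    for w
  proof -
    have "(\<integral>y. cis (w \<bullet> y) * conv_op fV \<mu> y \<partial>lborel) = (\<integral>y. cis (w \<bullet> y) * conv_op fV \<mu>' y \<partial>lborel)"
      using borel_measurable_conv_op[OF \<mu>] borel_measurable_conv_op[OF \<mu>'] eq
      by (intro integral_cong_AE) (auto intro!: borel_measurable_times)
    then show ?thesis using integral_cis_conv_op[OF \<mu>] integral_cis_conv_op[OF \<mu>'] by simp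
  qed
  then have "AE w in lborel. w \<notin> U" using fourier_density_nonzero by (auto simp: U_def)
  moreover have "open U"
    unfolding U_def using isCont_cint_cis[OF \<mu>] isCont_cint_cis[OF \<mu>']
    by (intro open_Collect_neq continuous_at_imp_continuous_on) auto
  ultimately have "U \<in> null_sets lborel" by (simp add: AE_iff_null_sets borel_open)
  then have "U = {}"
    using open_not_negligible[OF \<open>open U\<close>] by (auto simp: negligible_iff_null_sets null_sets_completionI)
  then show "cint \<mu> (\<lambda>x. cis (w \<bullet> x)) = cint \<mu>' (\<lambda>x. cis (w \<bullet> x))" for w
    by (auto simp: U_def)
qed

text \<open>The representing measure is only determined up to almost-everywhere equality of its
  convolution; choosing it that way makes the functional additive, since \<open>K\<^sub>V\<close> is additive
  only up to a null set.\<close>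

definition deconv_functional :: "(real^'n \<Rightarrow> complex) \<Rightarrow> (real^'n \<Rightarrow> complex) \<Rightarrow> complex" where
  "deconv_functional lam F = cint (SOME \<mu>. \<mu> \<in> cmeas \<and> (AE y in lborel. conv_op fV \<mu> y = F y)) lam"

lemma deconv_functional_eq:
  assumes lam: "lam \<in> C0" and \<mu>: "\<mu> \<in> cmeas" and F: "AE y in lborel. conv_op fV \<mu> y = F y"
  shows "deconv_functional lam F = cint \<mu> lam"
proof -
  let ?P = "\<lambda>\<mu>. \<mu> \<in> cmeas \<and> (AE y in lborel. conv_op fV \<mu> y = F y)"
  have "?P (SOME \<mu>. ?P \<mu>)" using \<mu> F by (intro someI[of ?P \<mu>]) auto
  moreover obtain B where "\<And>x. norm (lam x) \<le> B" using C0_boundedE[OF lam] by blast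
  ultimately have "cint (SOME \<mu>. ?P \<mu>) lam = cint \<mu> lam"
    using \<mu> F C0_continuous[OF lam]
    by (intro cint_eq_if_conv_op_ae_eq[where B=B]) (auto elim: AE_mp)
  then show ?thesis by (simp add: deconv_functional_def)
qed

lemma deconv_functional_conv_op:
  "lam \<in> C0 \<Longrightarrow> \<mu> \<in> cmeas \<Longrightarrow> deconv_functional lam (conv_op fV \<mu>) = cint \<mu> lam"
  by (rule deconv_functional_eq) auto

lemma deconv_functional_add:
  assumes lam: "lam \<in> C0" and "f \<in> admissible fV" "g \<in> admissible fV"
  shows "deconv_functional lam (\<lambda>x. f x + g x) = deconv_functional lam f + deconv_functional lam g"
proof -
  obtain \<mu>1 \<mu>2 where \<mu>1: "\<mu>1 \<in> cmeas" "f = conv_op fV \<mu>1" and \<mu>2: "\<mu>2 \<in> cmeas" "g = conv_op fV \<mu>2"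
    using assms(2,3) by (auto simp: admissible_def)
  obtain \<mu> where \<mu>: "\<mu> \<in> cmeas" "cmeas_sum \<mu> \<mu>1 \<mu>2" using cmeas_sumE[OF \<mu>1(1) \<mu>2(1)] .
  have "deconv_functional lam (\<lambda>x. f x + g x) = cint \<mu> lam"
    using conv_op_add_ae[OF \<mu>1(1) \<mu>2(1) \<mu>(2)] \<mu>1(2) \<mu>2(2) by (intro deconv_functional_eq[OF lam \<mu>(1)]) auto
  also have "\<dots> = cint \<mu>1 lam + cint \<mu>2 lam"
    using \<mu>(2) bounded_borel_C0[OF lam] cint_integrable[OF \<mu>1(1)] cint_integrable[OF \<mu>2(1)]
    by (auto simp: cmeas_sum_def bounded_borel_def)
  also have "\<dots> = deconv_functional lam f + deconv_functional lam g"
    using deconv_functional_conv_op[OF lam] \<mu>1 \<mu>2 by simp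
  finally show ?thesis .
qed

lemma deconv_functional_cmult:
  assumes lam: "lam \<in> C0" and "f \<in> admissible fV"
  shows "deconv_functional lam (\<lambda>x. c * f x) = c * deconv_functional lam f"
proof -
  obtain \<nu> g where \<mu>: "(\<nu>, g) \<in> cmeas" "f = conv_op fV (\<nu>, g)"
    using assms(2) by (auto simp: admissible_def)
  then have c\<mu>: "(\<nu>, \<lambda>x. c * g x) \<in> cmeas" by (auto simp: cmeas_def)
  have scale: "cint (\<nu>, \<lambda>x. c * g x) k = c * cint (\<nu>, g) k" for k
    unfolding cint_def by (simp add: mult.left_commute)
  then have "(\<lambda>x. c * f x) = conv_op fV (\<nu>, \<lambda>x. c * g x)" by (simp add: conv_op_def \<mu>(2))
  then show ?thesis using deconv_functional_conv_op[OF lam] \<mu> c\<mu> scale by simp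
qed

lemma norm_deconv_functional_le:
  assumes lam: "lam \<in> C0" "B > 0" "\<And>x. norm (lam x) \<le> B" and f: "f \<in> admissible fV"
  shows "norm (deconv_functional lam f) \<le> B * adm_norm fV f"
proof -
  let ?P = "\<lambda>\<mu>. \<mu> \<in> cmeas \<and> conv_op fV \<mu> = f"
  let ?\<mu> = "SOME \<mu>. ?P \<mu>"
  obtain \<mu>0 where "?P \<mu>0" using f by (auto simp: admissible_def)
  then have \<mu>: "?\<mu> \<in> cmeas" "conv_op fV ?\<mu> = f" using someI[of ?P \<mu>0] by blast+
  have "deconv_functional lam f = cint ?\<mu> lam"
    using deconv_functional_conv_op[OF lam(1) \<mu>(1)] \<mu>(2) by simp
  also have "norm \<dots> \<le> B * tv_norm ?\<mu>" by (rule norm_cint_le_tv_norm[OF \<mu>(1) lam])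
  finally show ?thesis by (simp add: adm_norm_def)
qed

lemma deconv_functional_in_adm_dual:
  assumes "lam \<in> C0"
  shows "deconv_functional lam \<in> adm_dual fV"
proof -
  obtain B where "B > 0" "\<And>x. norm (lam x) \<le> B" using C0_boundedE[OF assms] by metis
  then show ?thesis
    using deconv_functional_add[OF assms] deconv_functional_cmult[OF assms]
      norm_deconv_functional_le[OF assms]
    unfolding adm_dual_def by blast
qed

end

section \<open>Sums of independent random vectors\<close>

lemma convolution_density_lborel:
  fixes f :: "'a::ordered_euclidean_space \<Rightarrow> ennreal"
  assumes N: "finite_measure N" and sets_N [measurable_cong]: "sets N = sets borel"
    and [measurable]: "f \<in> borel_measurable borel" and fin: "finite_measure (density lborel f)"
  shows "N \<star> density lborel f = density lborel (\<lambda>y. \<integral>\<^sup>+x. f (y - x) \<partial>N)"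
proof (rule measure_eqI)
  interpret N: finite_measure N by fact
  interpret pair_sigma_finite N lborel ..
  fix A assume "A \<in> sets (N \<star> density lborel f)"
  then have [measurable]: "A \<in> sets borel" by simp
  have "emeasure (N \<star> density lborel f) A = (\<integral>\<^sup>+x. \<integral>\<^sup>+v. indicator A (x + v) \<partial>density lborel f \<partial>N)"
    using N fin sets_N by (intro convolution_emeasure') auto
  also have "\<dots> = (\<integral>\<^sup>+x. \<integral>\<^sup>+v. f v * indicator A (x + v) \<partial>lborel \<partial>N)"
    by (intro nn_integral_cong) (simp add: nn_integral_density)
  also have "\<dots> = (\<integral>\<^sup>+x. \<integral>\<^sup>+y. f (y - x) * indicator A y \<partial>lborel \<partial>N)"
  proof (rule nn_integral_cong)
    fix x
    show "(\<integral>\<^sup>+v. f v * indicator A (x + v) \<partial>lborel) = (\<integral>\<^sup>+y. f (y - x) * indicator A y \<partial>lborel)"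
      using nn_integral_lborel_translate[of "\<lambda>y. f (y - x) * indicator A y" x] by simp
  qed
  also have "\<dots> = (\<integral>\<^sup>+y. \<integral>\<^sup>+x. f (y - x) * indicator A y \<partial>N \<partial>lborel)"
  proof -
    have "(\<lambda>(x, y). f (y - x) * indicator A y) \<in> borel_measurable (N \<Otimes>\<^sub>M lborel)" by measurable
    from Fubini'[OF this] show ?thesis by simp
  qed
  also have "\<dots> = emeasure (density lborel (\<lambda>y. \<integral>\<^sup>+x. f (y - x) \<partial>N)) A"
    by (simp add: emeasure_density nn_integral_multc)
  finally show "emeasure (N \<star> density lborel f) A = emeasure (density lborel (\<lambda>y. \<integral>\<^sup>+x. f (y - x) \<partial>N)) A" .
qed simp

lemma (in prob_space) nn_integral_distributed_density: "distributed M N X f \<Longrightarrow> (\<integral>\<^sup>+x. f x \<partial>N) = 1"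
  using distributed_nn_integral[of M N X f "\<lambda>_. 1"] by (simp add: emeasure_space_1)

lemma (in prob_space) char_fun_eq_fourier_density:
  assumes V: "distributed M lborel V (\<lambda>x. ennreal (f x))" and f: "\<And>x. 0 \<le> f x"
  shows "char_fun M V w = fourier_density f w"
proof -
  have [measurable]: "f \<in> borel_measurable borel" using distributed_real_measurable[OF _ V] f by simp
  have "char_fun M V w = (\<integral>u. cis (w \<bullet> u) \<partial>distr M lborel V)"
    unfolding char_fun_def using distributed_measurable[OF V] by (simp add: integral_distr)
  also have "\<dots> = (\<integral>u. f u *\<^sub>R cis (w \<bullet> u) \<partial>lborel)"
    unfolding distributed_distr_eq_density[OF V] by (rule integral_density) (auto simp: f)
  also have "\<dots> = fourier_density f w" by (simp add: fourier_density_def scaleR_conv_of_real)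
  finally show ?thesis .
qed

lemma cmeas_finite_measure: "finite_measure N \<Longrightarrow> sets N = sets borel \<Longrightarrow> (N, \<lambda>_. 1) \<in> cmeas"
  by (simp add: cmeas_def finite_measure.integrable_const)

lemma conv_op_finite_measure: "conv_op f (N, \<lambda>_. 1) y = complex_of_real (\<integral>x. f (y - x) \<partial>N)"
  by (simp add: conv_op_def cint_def)

lemma (in convolution_kernel) distributed_add_indep:
  assumes "prob_space M" and V: "distributed M lborel V (\<lambda>x. ennreal (fV x))"
    and [measurable]: "X \<in> borel_measurable M" and indep: "prob_space.indep_var M borel X borel V"
  shows "distributed M lborel (\<lambda>s. X s + V s) (\<lambda>y. ennreal (\<integral>x. fV (y - x) \<partial>distr M borel X))"
proof -
  interpret prob_space M by fact
  define PX where "PX = distr M borel X"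
  interpret PX: prob_space PX unfolding PX_def by (rule prob_space_distr) simp
  have sets_PX [measurable_cong]: "sets PX = sets borel" by (simp add: PX_def)
  have [measurable]: "V \<in> borel_measurable M" using distributed_measurable[OF V] by simp
  define G where "G y = (\<integral>\<^sup>+x. ennreal (fV (y - x)) \<partial>PX)" for y
  have [measurable]: "G \<in> borel_measurable borel" unfolding G_def by measurable
  have [measurable]: "(\<lambda>y. \<integral>x. fV (y - x) \<partial>PX) \<in> borel_measurable borel" by measurable
  have PV: "distr M borel V = density lborel (\<lambda>x. ennreal (fV x))"
    using distributed_distr_eq_density[OF V] by (simp cong: distr_cong)
  have "distr M lborel (\<lambda>s. X s + V s) = distr M borel (\<lambda>s. X s + V s)" by (rule distr_cong) auto
  also have "\<dots> = (PX \<star> distr M borel V)" unfolding PX_def by (rule sum_indep_random_variable[OF indep]) auto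
  also have "\<dots> = density lborel G"
    unfolding PV G_def using PX.finite_measure_axioms distributed_finite_measure_density[OF V]
    by (intro convolution_density_lborel sets_PX) auto
  finally have G: "distributed M lborel (\<lambda>s. X s + V s) G"
    unfolding distributed_def using distributed_measurable[OF V] by auto
  have "AE y in lborel. G y \<noteq> \<infinity>"
    using nn_integral_distributed_density[OF G] by (intro nn_integral_PInf_AE) auto
  then have "AE y in lborel. G y = ennreal (\<integral>x. fV (y - x) \<partial>PX)"
  proof eventually_elim
    case (elim y)
    then have "integrable PX (\<lambda>x. fV (y - x))"
      using kernel_nonneg by (simp add: integrable_iff_bounded G_def less_top)
    then show ?case unfolding G_def using kernel_nonneg by (intro nn_integral_eq_integral) auto
  qed
  then have "distributed M lborel (\<lambda>s. X s + V s) (\<lambda>y. ennreal (\<integral>x. fV (y - x) \<partial>PX))"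
    using G by (subst (asm) distributed_cong_density) auto
  then show ?thesis by (simp add: PX_def)
qed

theorem theorem1:
  fixes M :: "'s measure" and V :: "'s \<Rightarrow> real^'n::finite" and fV :: "real^'n \<Rightarrow> real"
  assumes "prob_space M"
    and "fV \<in> borel_measurable borel" and "\<And>x. fV x \<ge> 0"
    and "distributed M lborel V (\<lambda>x. ennreal (fV x))"
    and "AE \<omega> in lborel. char_fun M V \<omega> \<noteq> 0"
  shows "\<forall>lam \<in> C0. \<exists>T \<in> adm_dual fV.
     (\<forall>\<mu> \<in> cmeas. T (conv_op fV \<mu>) = cint \<mu> lam) \<and>
     (\<forall>T' \<in> adm_dual fV. (\<forall>\<mu> \<in> cmeas. T' (conv_op fV \<mu>) = cint \<mu> lam) \<longrightarrow>
         (\<forall>f \<in> admissible fV. T' f = T f)) \<and>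
     (\<forall>X :: 's \<Rightarrow> real^'n. X \<in> borel_measurable M \<and> prob_space.indep_var M borel X borel V \<longrightarrow>
        (let fY = conv_op fV (distr M borel X, \<lambda>_. 1) in
          (\<forall>y. Im (fY y) = 0) \<and>
          distributed M lborel (\<lambda>s. X s + V s) (\<lambda>y. ennreal (Re (fY y))) \<and>
          T fY = (\<integral>x. lam x \<partial>(distr M borel X))))"
proof -
  interpret prob_space M by fact
  interpret deconvolution_kernel fV
    using assms nn_integral_distributed_density[OF assms(4)] char_fun_eq_fourier_density[OF assms(4)]
    by unfold_locales auto
  have PX: "(distr M borel X, \<lambda>_. 1) \<in> cmeas" if "X \<in> borel_measurable M" for X
    using that by (intro cmeas_finite_measure prob_space.finite_measure prob_space_distr) auto
  show ?thesis
  proof (intro ballI, rule rev_bexI[OF deconv_functional_in_adm_dual], assumption,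
      intro conjI ballI impI allI)
    fix lam :: "real^'n \<Rightarrow> complex" and \<mu> :: "'n cmeas" assume "lam \<in> C0" "\<mu> \<in> cmeas"
    then show "deconv_functional lam (conv_op fV \<mu>) = cint \<mu> lam" by (rule deconv_functional_conv_op)
  next
    fix lam :: "real^'n \<Rightarrow> complex" and T' f assume "lam \<in> C0" "\<forall>\<mu>\<in>cmeas. T' (conv_op fV \<mu>) = cint \<mu> lam" "f \<in> admissible fV"
    then show "T' f = deconv_functional lam f" by (auto simp: admissible_def deconv_functional_conv_op)
  next
    fix lam :: "real^'n \<Rightarrow> complex" and X
    assume lam: "lam \<in> C0" and X: "X \<in> borel_measurable M \<and> indep_var borel X borel V"
    then show "let fY = conv_op fV (distr M borel X, \<lambda>_. 1) in (\<forall>y. Im (fY y) = 0) \<and>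
        distributed M lborel (\<lambda>s. X s + V s) (\<lambda>y. ennreal (Re (fY y))) \<and>
        deconv_functional lam fY = (\<integral>x. lam x \<partial>distr M borel X)"
      using deconv_functional_conv_op[OF lam PX] distributed_add_indep[OF \<open>prob_space M\<close> assms(4)]
      by (simp add: conv_op_finite_measure cint_def)
  qed
qed

end
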